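(* Let $\Omega\subset\mathbb{R}^n$ ($n\ge3$) be a bounded Lipschitz domain and assume: $p_0,p_1$ measurable with $2\le p_0^-\le p_0\le p_0^+<\infty$, $1<p_1^-\le p_1\le p_1^+<\infty$, $p_0\in C^1(\bar\Omega)$, $p_1\in C^0(\bar\Omega)$; $\alpha$ measurable with $1\le\alpha^-\le\alpha\le\alpha^+<\infty$ and $\alpha\ge p_0+\varepsilon$ for some $\varepsilon>0$; $c$ Carathéodory with $|c(x,\tau)|\le c_0(x)|\tau|^{\alpha(x)-1}+c_1(x)$ and $c(x,\tau)\tau\ge c_2(x)|\tau|^{\alpha(x)}$ a.e., where $c_0,c_2\in L^\infty(\Omega)$, $c_1\in L^{\alpha'(x)}(\Omega)$ are nonnegative and $c_2\ge\tilde C>0$. Let $X_0=W_0^{1,p_0(x)}(\Omega)\cap W_0^{1,p_1(x)}(\Omega)\cap L^{\alpha(x)}(\Omega)$ and for $u\in X_0$ $$\langle T(u),u\rangle=\int_\Omega|\nabla u|^{p_1(x)}dx+\sum_{i=1}^n\int_\Omega|u|^{p_0(x)-2}|D_iu|^2dx+\int_\Omega c(x,u)u\,dx.$$ Then $T$ is coercive in the generalized sense on $X_0$: there exist $M>0$ and continuous functions $\lambda_0,\lambda_1$ on $[0,\infty)$ with $\lambda_0(\tau),\lambda_1(\tau)\nearrow\infty$ as $\tau\nearrow\infty$ such that for every $u\in X_0$ with $\|u\|_{W_0^{1,p_1(x)}(\Omega)}\ge M$ and $[u]_S\ge M$, $$\langle T(u),u\rangle\ge\lambda_0\big(\|u\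|_{W_0^{1,p_1(x)}(\Omega)}\big)\|u\|_{W_0^{1,p_1(x)}(\Omega)}+\lambda_1([u]_S)[u]_S.$$
   Context: $D_i=\partial/\partial x_i$; $q_0=p_0/(p_0-1)$, $\alpha'=\alpha/(\alpha-1)$; variable-exponent Lebesgue/Sobolev spaces $L^{p(x)}$, $W_0^{1,p(x)}$ are as usual, with $\|u\|_{W_0^{1,p_1(x)}}=\sum_i\|D_iu\|_{L^{p_1(x)}}$ (Luxemburg norms). $T=A+B_1+B_2$ with $A(u)=-\operatorname{div}(|\nabla u|^{p_1-2}\nabla u)$, $B_1(u)=-\sum_iD_i(|u|^{p_0-2}D_iu)$, $B_2(u)=c(x,u)$. $[u]_S$ is the pseudo-norm of $\mathring S_{1,q_0(x)(p_0(x)-2),q_0(x),\alpha(x)}(\Omega)$, namely with $\gamma=q_0(p_0-2)$, $\beta=q_0$: $[u]_S=\inf\{\lambda>0:\int_\Omega|u/\lambda|^{\alpha(x)}dx+\sum_{i=1}^n\int_\Omega\big|\,|u|^{\gamma(x)/\beta(x)}D_iu/\lambda^{\gamma(x)/\beta(x)+1}\big|^{\beta(x)}dx\le1\}$. *)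

theory Defs
  imports "HOL-Analysis.Analysis"
begin

(* power with the convention t^0 = 1 (also for t = 0); Isabelle's powr has 0 powr a = 0 *)
definition npow :: "real \<Rightarrow> real \<Rightarrow> real" where
  "npow t a = (if a = 0 then 1 else t powr a)"

definition pd :: "'n::finite \<Rightarrow> (real^'n \<Rightarrow> real) \<Rightarrow> real^'n \<Rightarrow> real" where
  "pd i f x = deriv (\<lambda>t. f (x + t *\<^sub>R axis i 1)) 0"

definition smooth_on_set :: "(real^'n::finite) set \<Rightarrow> (real^'n \<Rightarrow> real) \<Rightarrow> bool" where
  "smooth_on_set U f \<longleftrightarrow> (\<exists>D :: 'n list \<Rightarrow> real^'n \<Rightarrow> real. D [] = f \<and>
      (\<forall>l. continuous_on U (D l)) \<and>
      (\<forall>l i x. x \<in> U \<longrightarrow> ((\<lambda>t. D l (x + t *\<^sub>R axis i 1)) has_real_derivative D (i # l) x) (at 0)))"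

definition test_fun :: "(real^'n::finite) set \<Rightarrow> (real^'n \<Rightarrow> real) \<Rightarrow> bool" where
  "test_fun \<Omega> \<phi> \<longleftrightarrow> smooth_on_set UNIV \<phi> \<and> compact (closure {x. \<phi> x \<noteq> 0})
      \<and> closure {x. \<phi> x \<noteq> 0} \<subseteq> \<Omega>"

definition weak_pderiv :: "(real^'n::finite) set \<Rightarrow> (real^'n \<Rightarrow> real) \<Rightarrow> 'n \<Rightarrow> (real^'n \<Rightarrow> real) \<Rightarrow> bool" where
  "weak_pderiv \<Omega> u i v \<longleftrightarrow>
     (\<forall>K. compact K \<and> K \<subseteq> \<Omega> \<longrightarrow> set_integrable lebesgue K u \<and> set_integrable lebesgue K v) \<and>
     (\<forall>\<phi>. test_fun \<Omega> \<phi> \<longrightarrow>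
        (LINT x|lebesgue_on \<Omega>. u x * pd i \<phi> x) = - (LINT x|lebesgue_on \<Omega>. v x * \<phi> x))"

definition modular :: "(real^'n::finite) set \<Rightarrow> (real^'n \<Rightarrow> real) \<Rightarrow> (real^'n \<Rightarrow> real) \<Rightarrow> ennreal" where
  "modular \<Omega> p f = (\<integral>\<^sup>+ x. ennreal (\<bar>f x\<bar> powr p x) \<partial>lebesgue_on \<Omega>)"

definition var_Lp :: "(real^'n::finite) set \<Rightarrow> (real^'n \<Rightarrow> real) \<Rightarrow> (real^'n \<Rightarrow> real) \<Rightarrow> bool" where
  "var_Lp \<Omega> p f \<longleftrightarrow> f \<in> borel_measurable (lebesgue_on \<Omega>) \<and>
      (\<exists>s>0. modular \<Omega> p (\<lambda>x. f x / s) < \<infinity>)"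

definition lux :: "(real^'n::finite) set \<Rightarrow> (real^'n \<Rightarrow> real) \<Rightarrow> (real^'n \<Rightarrow> real) \<Rightarrow> real" where
  "lux \<Omega> p f = Inf {s. s > 0 \<and> modular \<Omega> p (\<lambda>x. f x / s) \<le> 1}"

definition W0 :: "(real^'n::finite) set \<Rightarrow> (real^'n \<Rightarrow> real) \<Rightarrow> (real^'n \<Rightarrow> real) \<Rightarrow> ('n \<Rightarrow> real^'n \<Rightarrow> real) \<Rightarrow> bool" where
  "W0 \<Omega> p u Du \<longleftrightarrow> var_Lp \<Omega> p u \<and> (\<forall>i. var_Lp \<Omega> p (Du i)) \<and>
     (\<exists>\<phi> :: nat \<Rightarrow> real^'n \<Rightarrow> real. (\<forall>k. test_fun \<Omega> (\<phi> k)) \<and>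
        (\<lambda>k. lux \<Omega> p (\<lambda>x. u x - \<phi> k x) + (\<Sum>i\<in>UNIV. lux \<Omega> p (\<lambda>x. Du i x - pd i (\<phi> k) x)))
          \<longlonglongrightarrow> 0)"

definition W0norm :: "(real^'n::finite) set \<Rightarrow> (real^'n \<Rightarrow> real) \<Rightarrow> ('n \<Rightarrow> real^'n \<Rightarrow> real) \<Rightarrow> real" where
  "W0norm \<Omega> p Du = (\<Sum>i\<in>UNIV. lux \<Omega> p (Du i))"

definition Snorm :: "(real^'n::finite) set \<Rightarrow> (real^'n \<Rightarrow> real) \<Rightarrow> (real^'n \<Rightarrow> real)
     \<Rightarrow> (real^'n \<Rightarrow> real) \<Rightarrow> ('n \<Rightarrow> real^'n \<Rightarrow> real) \<Rightarrow> real" where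
  "Snorm \<Omega> p0 \<alpha> u Du =
    (let \<beta> = (\<lambda>x. p0 x / (p0 x - 1)); \<gamma> = (\<lambda>x. \<beta> x * (p0 x - 2)) in
     Inf {s. s > 0 \<and>
        modular \<Omega> \<alpha> (\<lambda>x. u x / s) +
        (\<Sum>i\<in>UNIV. modular \<Omega> \<beta>
            (\<lambda>x. npow \<bar>u x\<bar> (\<gamma> x / \<beta> x) * Du i x / s powr (\<gamma> x / \<beta> x + 1))) \<le> 1})"

definition Tpair :: "(real^'n::finite) set \<Rightarrow> (real^'n \<Rightarrow> real) \<Rightarrow> (real^'n \<Rightarrow> real)
     \<Rightarrow> (real^'n \<Rightarrow> real \<Rightarrow> real) \<Rightarrow> (real^'n \<Rightarrow> real) \<Rightarrow> ('n \<Rightarrow> real^'n \<Rightarrow> real) \<Rightarrow> real" where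
  "Tpair \<Omega> p0 p1 c u Du =
     (LINT x|lebesgue_on \<Omega>. norm (\<chi> i. Du i x) powr p1 x)
     + (\<Sum>i\<in>UNIV. LINT x|lebesgue_on \<Omega>. npow \<bar>u x\<bar> (p0 x - 2) * (Du i x)\<^sup>2)
     + (LINT x|lebesgue_on \<Omega>. c x (u x) * u x)"

definition lipschitz_domain :: "(real^'n::finite) set \<Rightarrow> bool" where
  "lipschitz_domain \<Omega> \<longleftrightarrow> open \<Omega> \<and> connected \<Omega> \<and> bounded \<Omega> \<and>
    (\<forall>x0\<in>frontier \<Omega>. \<exists>R k g L r h.
       orthogonal_transformation (R :: real^'n \<Rightarrow> real^'n) \<and> L-lipschitz_on UNIV g \<and>
       (\<forall>y t. g (y + t *\<^sub>R axis k 1) = g y) \<and> r > 0 \<and> h > 0 \<and>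
       (\<forall>x. (let y = R (x - x0) in norm (y - (y $ k) *\<^sub>R axis k 1) < r \<and> \<bar>y $ k\<bar> < h) \<longrightarrow>
            (x \<in> \<Omega> \<longleftrightarrow> (R (x - x0)) $ k > g (R (x - x0)))))"

definition C1_closure :: "(real^'n::finite) set \<Rightarrow> (real^'n \<Rightarrow> real) \<Rightarrow> bool" where
  "C1_closure \<Omega> f \<longleftrightarrow> continuous_on (closure \<Omega>) f \<and>
     (\<exists>G :: real^'n \<Rightarrow> real^'n. continuous_on (closure \<Omega>) G \<and>
        (\<forall>x\<in>\<Omega>. (f has_derivative (\<lambda>h. G x \<bullet> h)) (at x)))"

end

theory Submission
  imports Defs
begin

text \<open>
  The three terms of <T(u),u> are estimated separately. The p1-term dominates the modular of the
  component D_k u of largest Luxemburg norm, and a Luxemburg norm L \<ge> 2 forces the modular to be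
  at least (L/2)^a with a = ess inf p1 > 1; this gives lam0.
  If S = [u]_S \<ge> 2, the modular sum defining [u]_S exceeds 1 at s = S/2, while, as p0 \<ge> 2 and
  \<alpha> \<ge> p0, each of its terms is at most s^-2 times an integral of |u|^\<alpha>, |u|^(p0-2) |D_i u|^2
  or 1. Coercivity c(x,\<tau>) \<tau> \<ge> C |\<tau>|^\<alpha> bounds the integral of |u|^\<alpha> by that of c(x,u) u,
  so S^2 is controlled by the last two terms of <T(u),u> up to an additive constant, which is
  absorbed once S is large; this gives a linear lam1.
\<close>

lemma npow_nonneg [simp]: "0 \<le> npow t a"
  by (simp add: npow_def)

lemma powr_diff_one_mult:
  fixes x a :: real
  assumes "0 \<le> x"
  shows "x powr (a - 1) * x = x powr a"
  using powr_mult_base[OF assms, of "a - 1"] by (simp add: mult.commute)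

lemma abs_powr_le_scaled:
  fixes f s p P :: real
  assumes "0 < s" "0 \<le> p" "p \<le> P"
  shows "\<bar>f\<bar> powr p \<le> max 1 s powr P * \<bar>f / s\<bar> powr p"
proof -
  have "s powr p \<le> max 1 s powr P"
  proof (cases "1 \<le> s")
    case True
    then show ?thesis using assms by (simp add: powr_mono)
  next
    case False
    then have "s powr p \<le> 1" using assms by (intro powr_le1) auto
    also have "1 \<le> max 1 s powr P" using assms by (intro ge_one_powr_ge_zero) auto
    finally show ?thesis .
  qed
  moreover have "\<bar>f\<bar> powr p = s powr p * \<bar>f / s\<bar> powr p"
    using assms by (simp add: abs_div powr_divide)
  ultimately show ?thesis by (simp add: mult_right_mono)
qed

lemma powr_mult_abs_div_le:
  fixes f s p a :: real
  assumes "1 \<le> s" "a \<le> p"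
  shows "s powr a * \<bar>f / s\<bar> powr p \<le> \<bar>f\<bar> powr p"
proof -
  have "s powr a \<le> s powr p" using assms by (simp add: powr_mono)
  moreover have "\<bar>f\<bar> powr p = s powr p * \<bar>f / s\<bar> powr p"
    using assms by (simp add: abs_div powr_divide)
  ultimately show ?thesis by (simp add: mult_right_mono)
qed

lemma abs_powr_le_powr_plus_one:
  fixes v p a :: real
  assumes "0 \<le> p" "p \<le> a"
  shows "\<bar>v\<bar> powr p \<le> \<bar>v\<bar> powr a + 1"
proof (cases "1 \<le> \<bar>v\<bar>")
  case True
  then show ?thesis using assms powr_mono[of p a "\<bar>v\<bar>"] by linarith
next
  case False
  then have "\<bar>v\<bar> powr p \<le> 1" using assms by (intro powr_le1) auto
  then show ?thesis using powr_ge_zero[of "\<bar>v\<bar>" a] by linarith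
qed

lemma npow_mult_square_le:
  fixes v d p :: real
  assumes "2 \<le> p"
  shows "npow \<bar>v\<bar> (p - 2) * d\<^sup>2 \<le> \<bar>v\<bar> powr p + \<bar>d\<bar> powr p"
proof (cases "p = 2")
  case True
  then show ?thesis by (simp add: npow_def powr_numeral)
next
  case False
  then have "npow \<bar>v\<bar> (p - 2) * d\<^sup>2 = \<bar>v\<bar> powr (p - 2) * \<bar>d\<bar> powr 2"
    by (simp add: npow_def powr_numeral)
  also have "\<dots> \<le> (max \<bar>v\<bar> \<bar>d\<bar>) powr (p - 2) * (max \<bar>v\<bar> \<bar>d\<bar>) powr 2"
    using assms by (intro mult_mono powr_mono2) auto
  also have "\<dots> = (max \<bar>v\<bar> \<bar>d\<bar>) powr p"
    by (metis powr_add diff_add_cancel)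
  also have "\<dots> \<le> \<bar>v\<bar> powr p + \<bar>d\<bar> powr p"
    by (simp add: max_def)
  finally show ?thesis .
qed

lemma mult_abs_le_conjugate_powr:
  fixes c t a :: real
  assumes "0 \<le> c" "1 < a"
  shows "c * \<bar>t\<bar> \<le> c powr (a / (a - 1)) + \<bar>t\<bar> powr a"
proof (cases "c \<le> \<bar>t\<bar> powr (a - 1)")
  case True
  then have "c * \<bar>t\<bar> \<le> \<bar>t\<bar> powr (a - 1) * \<bar>t\<bar>" by (rule mult_right_mono) simp
  also have "\<dots> = \<bar>t\<bar> powr a" by (simp add: powr_diff_one_mult)
  finally show ?thesis using powr_ge_zero[of c "a / (a - 1)"] by linarith
next
  case False
  then have "\<bar>t\<bar> \<le> c powr (1 / (a - 1))"
    using assms powr_mono2[of "1 / (a - 1)" "\<bar>t\<bar> powr (a - 1)" c]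
    by (simp add: powr_powr)
  then have "c * \<bar>t\<bar> \<le> c * c powr (1 / (a - 1))" using assms by (simp add: mult_left_mono)
  also have "\<dots> = c powr (a / (a - 1))"
  proof -
    have "a / (a - 1) = 1 + 1 / (a - 1)" using assms by (simp add: field_simps)
    then show ?thesis using assms by (simp add: powr_mult_base)
  qed
  finally show ?thesis using powr_ge_zero[of "\<bar>t\<bar>" a] by linarith
qed

lemma abs_divide_powr_le:
  fixes v s a :: real
  assumes "1 \<le> s" "2 \<le> a"
  shows "\<bar>v / s\<bar> powr a \<le> s powr (-2) * \<bar>v\<bar> powr a"
  using powr_mult_abs_div_le[OF assms] assms by (simp add: powr_minus field_simps)

lemma growth_bound_mult:
  fixes c c0 c1 t a :: real
  assumes "\<bar>c\<bar> \<le> c0 * npow \<bar>t\<bar> (a - 1) + c1" "1 < a" "0 \<le> c0" "0 \<le> c1"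
  shows "\<bar>c * t\<bar> \<le> (c0 + 1) * \<bar>t\<bar> powr a + c1 powr (a / (a - 1))"
proof -
  have "\<bar>c * t\<bar> \<le> (c0 * \<bar>t\<bar> powr (a - 1) + c1) * \<bar>t\<bar>"
    using assms by (simp add: abs_mult mult_right_mono npow_def)
  also have "\<dots> = c0 * (\<bar>t\<bar> powr (a - 1) * \<bar>t\<bar>) + c1 * \<bar>t\<bar>"
    by (simp add: algebra_simps)
  also have "\<dots> = c0 * \<bar>t\<bar> powr a + c1 * \<bar>t\<bar>"
    by (simp add: powr_diff_one_mult)
  finally show ?thesis
    using mult_abs_le_conjugate_powr[OF assms(4,2), of t] by (simp add: algebra_simps)
qed

lemma powr_mult_conjugate_le:
  fixes a d p :: real
  assumes "0 < a" "2 \<le> p"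
  shows "(a powr (p - 2) * \<bar>d\<bar>) powr (p / (p - 1)) \<le> a powr (p - 2) * d\<^sup>2 + a powr p"
proof -
  define \<beta> where "\<beta> = p / (p - 1)"
  define m where "m = max a \<bar>d\<bar>"
  have \<beta>: "0 \<le> \<beta>" "\<beta> \<le> 2" "(p - 2) * \<beta> = (p - 2) + (2 - \<beta>)"
    using assms by (auto simp: \<beta>_def field_simps)
  have "a powr (2 - \<beta>) * \<bar>d\<bar> powr \<beta> \<le> m powr (2 - \<beta>) * m powr \<beta>"
    using \<beta> assms by (intro mult_mono powr_mono2) (auto simp: m_def)
  also have "\<dots> = m\<^sup>2"
    using assms by (simp add: m_def flip: powr_add)
  also have "\<dots> \<le> a\<^sup>2 + d\<^sup>2"
    by (simp add: m_def max_def)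
  finally have key: "a powr (2 - \<beta>) * \<bar>d\<bar> powr \<beta> \<le> a\<^sup>2 + d\<^sup>2" .
  have "(a powr (p - 2) * \<bar>d\<bar>) powr \<beta> = a powr ((p - 2) * \<beta>) * \<bar>d\<bar> powr \<beta>"
    by (simp add: powr_mult powr_powr)
  also have "\<dots> = a powr (p - 2) * (a powr (2 - \<beta>) * \<bar>d\<bar> powr \<beta>)"
    by (simp only: \<beta>(3) powr_add mult.assoc)
  also have "\<dots> \<le> a powr (p - 2) * (a\<^sup>2 + d\<^sup>2)"
    using key by (simp add: mult_left_mono)
  also have "\<dots> = a powr (p - 2) * d\<^sup>2 + a powr p"
    using assms by (simp add: algebra_simps powr_add [of a "p - 2" 2, simplified])
  finally show ?thesis unfolding \<beta>_def .
qed

text \<open>The exponents are those of [u]_S with \<beta> = p/(p-1): since \<gamma>/\<beta> = p - 2 and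
  (\<gamma>/\<beta> + 1) \<beta> = p, the scaling by s contributes a factor s^-p \<le> s^-2.\<close>
lemma Snorm_integrand_le:
  fixes p s v d :: real
  assumes p: "2 \<le> p" and s: "1 \<le> s"
  shows "abs (npow \<bar>v\<bar> ((p / (p - 1)) * (p - 2) / (p / (p - 1))) * d /
            s powr ((p / (p - 1)) * (p - 2) / (p / (p - 1)) + 1)) powr (p / (p - 1))
         \<le> s powr (-2) * (npow \<bar>v\<bar> (p - 2) * d\<^sup>2 + \<bar>v\<bar> powr p)"
proof -
  define \<beta> where "\<beta> = p / (p - 1)"
  have \<beta>: "0 < \<beta>" "(p - 2 + 1) * \<beta> = p" using p by (auto simp: \<beta>_def field_simps)
  have core: "(npow \<bar>v\<bar> (p - 2) * \<bar>d\<bar>) powr \<beta> \<le> npow \<bar>v\<bar> (p - 2) * d\<^sup>2 + \<bar>v\<bar> powr p"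
  proof (cases "v = 0")
    case True
    then show ?thesis
      using p by (cases "p = 2") (auto simp: npow_def \<beta>_def powr_numeral)
  next
    case False
    then have "npow \<bar>v\<bar> (p - 2) = \<bar>v\<bar> powr (p - 2)" by (simp add: npow_def)
    then show ?thesis using powr_mult_conjugate_le[of "\<bar>v\<bar>" p d] False p by (simp add: \<beta>_def)
  qed
  have "abs (npow \<bar>v\<bar> (p - 2) * d / s powr (p - 2 + 1)) powr \<beta>
        = (npow \<bar>v\<bar> (p - 2) * \<bar>d\<bar>) powr \<beta> / (s powr (p - 2 + 1)) powr \<beta>"
    using s by (simp add: abs_mult powr_divide)
  also have "\<dots> = (npow \<bar>v\<bar> (p - 2) * \<bar>d\<bar>) powr \<beta> * s powr (- p)"
    using s \<beta>(2) by (simp add: powr_powr powr_minus divide_inverse)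
  also have "\<dots> \<le> (npow \<bar>v\<bar> (p - 2) * d\<^sup>2 + \<bar>v\<bar> powr p) * s powr (-2)"
    using core s p by (intro mult_mono powr_mono) auto
  finally show ?thesis
    using \<beta> by (simp add: \<beta>_def [symmetric] mult.commute)
qed

lemma borel_measurable_lebesgue_on_AE:
  fixes f g :: "'a::euclidean_space \<Rightarrow> real"
  assumes S: "S \<in> sets lebesgue" and f: "f \<in> borel_measurable (lebesgue_on S)"
    and ae: "AE x in lebesgue_on S. f x = g x"
  shows "g \<in> borel_measurable (lebesgue_on S)"
proof -
  have SS: "S \<inter> space lebesgue \<in> sets lebesgue" using S by simp
  have "(\<lambda>x. indicator S x *\<^sub>R f x) \<in> borel_measurable lebesgue"
    using f borel_measurable_restrict_space_iff[OF SS] by blast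
  moreover have "AE x in lebesgue. indicator S x *\<^sub>R f x = indicator S x *\<^sub>R g x"
  proof -
    have "AE x in lebesgue. x \<in> S \<longrightarrow> f x = g x"
      using ae S by (simp add: AE_restrict_space_iff)
    then show ?thesis by eventually_elim (auto simp: indicator_def)
  qed
  ultimately have "(\<lambda>x. indicator S x *\<^sub>R g x) \<in> borel_measurable lebesgue"
    by (rule borel_measurable_AE)
  then show ?thesis
    using borel_measurable_restrict_space_iff[OF SS] by blast
qed

lemma LIMSEQ_floor_mult_divide:
  fixes x :: real
  shows "(\<lambda>k. real_of_int \<lfloor>real (Suc k) * x\<rfloor> / real (Suc k)) \<longlonglongrightarrow> x"
proof (rule tendsto_sandwich[of "\<lambda>k. x - 1 / real (Suc k)" _ _ "\<lambda>k. x"])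
  have "x - 1 / real (Suc k) \<le> real_of_int \<lfloor>real (Suc k) * x\<rfloor> / real (Suc k)" for k
  proof -
    have "real (Suc k) * x - 1 \<le> real_of_int \<lfloor>real (Suc k) * x\<rfloor>"
      by linarith
    then have "(real (Suc k) * x - 1) / real (Suc k) \<le> real_of_int \<lfloor>real (Suc k) * x\<rfloor> / real (Suc k)"
      by (rule divide_right_mono) simp
    then show ?thesis by (simp add: diff_divide_distrib del: of_nat_Suc)
  qed
  then show "\<forall>\<^sub>F k in sequentially. x - 1 / real (Suc k) \<le> real_of_int \<lfloor>real (Suc k) * x\<rfloor> / real (Suc k)"
    by simp
  have "real_of_int \<lfloor>real (Suc k) * x\<rfloor> \<le> real (Suc k) * x" for k
    by linarith
  then show "\<forall>\<^sub>F k in sequentially. real_of_int \<lfloor>real (Suc k) * x\<rfloor> / real (Suc k) \<le> x"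
    by (intro always_eventually allI) (simp add: field_simps del: of_nat_Suc)
  have "(\<lambda>k. 1 / real (Suc k)) \<longlonglongrightarrow> 0"
    using LIMSEQ_inverse_real_of_nat by (simp add: inverse_eq_divide)
  then show "(\<lambda>k. x - 1 / real (Suc k)) \<longlonglongrightarrow> x"
    using tendsto_diff[OF tendsto_const[of x]] by fastforce
qed simp

text \<open>Off a null set, c x (u x) is the limit of c x at the countably valued approximations
  \<lfloor>k u x\<rfloor> / k of u x.\<close>
lemma caratheodory_measurable:
  fixes c :: "'a::euclidean_space \<Rightarrow> real \<Rightarrow> real"
  assumes S: "S \<in> sets lebesgue"
    and meas: "\<And>\<tau>. (\<lambda>x. c x \<tau>) \<in> borel_measurable (lebesgue_on S)"
    and cont: "AE x in lebesgue_on S. continuous_on UNIV (c x)"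
    and u: "u \<in> borel_measurable (lebesgue_on S)"
  shows "(\<lambda>x. c x (u x)) \<in> borel_measurable (lebesgue_on S)"
proof -
  let ?L = "lebesgue_on S"
  obtain N where N: "N \<in> null_sets ?L" "{x \<in> space ?L. \<not> continuous_on UNIV (c x)} \<subseteq> N"
    using cont by (metis AE_E null_setsI)
  define F where "F x = (if x \<in> N then 0 else c x (u x))" for x
  have "F \<in> borel_measurable ?L"
  proof (rule borel_measurable_LIMSEQ_real)
    fix k :: nat
    have "(\<lambda>x. \<lfloor>real (Suc k) * u x\<rfloor>) \<in> measurable ?L (count_space UNIV)"
      using u by measurable
    then have "(\<lambda>x. c x (real_of_int \<lfloor>real (Suc k) * u x\<rfloor> / real (Suc k))) \<in> borel_measurable ?L"
      by (rule measurable_compose_countable[OF meas])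
    then show "(\<lambda>x. if x \<in> N then 0 else c x (real_of_int \<lfloor>real (Suc k) * u x\<rfloor> / real (Suc k)))
      \<in> borel_measurable ?L"
      using null_setsD2[OF N(1)] by measurable
  next
    fix x assume x: "x \<in> space ?L"
    show "(\<lambda>k. if x \<in> N then 0 else c x (real_of_int \<lfloor>real (Suc k) * u x\<rfloor> / real (Suc k)))
      \<longlonglongrightarrow> F x"
    proof (cases "x \<in> N")
      case False
      then have "isCont (c x) (u x)"
        using N(2) x by (auto simp: continuous_on_eq_continuous_at)
      then show ?thesis
        using False isCont_tendsto_compose[OF _ LIMSEQ_floor_mult_divide] by (simp add: F_def)
    qed (simp add: F_def)
  qed
  moreover have "AE x in ?L. F x = c x (u x)"
    using AE_not_in[OF N(1)] by eventually_elim (simp add: F_def)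
  ultimately show ?thesis
    by (rule borel_measurable_lebesgue_on_AE[OF S])
qed

lemma Inf_half_not_mem:
  fixes Q :: "real \<Rightarrow> bool"
  assumes "2 \<le> Inf {s. 0 < s \<and> Q s}"
  shows "\<not> Q (Inf {s. 0 < s \<and> Q s} / 2)"
proof
  let ?t = "Inf {s. 0 < s \<and> Q s}"
  assume "Q (?t / 2)"
  then have "?t \<le> ?t / 2"
    using assms by (intro cInf_lower) (auto intro: bdd_belowI[of _ 0])
  then show False using assms by linarith
qed

lemma modular_ge_half_lux_powr:
  fixes \<Omega> :: "(real^'n::finite) set"
  assumes "p \<in> borel_measurable (lebesgue_on \<Omega>)" "f \<in> borel_measurable (lebesgue_on \<Omega>)"
    and "AE x in lebesgue_on \<Omega>. a \<le> p x" and "2 \<le> lux \<Omega> p f"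
  shows "ennreal ((lux \<Omega> p f / 2) powr a) \<le> modular \<Omega> p f"
proof -
  define s where "s = lux \<Omega> p f / 2"
  have s: "1 \<le> s" using assms(4) by (simp add: s_def)
  have "\<not> modular \<Omega> p (\<lambda>x. f x / s) \<le> 1"
    using Inf_half_not_mem[of "\<lambda>s. modular \<Omega> p (\<lambda>x. f x / s) \<le> 1"] assms(4)
    unfolding s_def lux_def by simp
  then have "ennreal (s powr a) * 1 \<le> ennreal (s powr a) * modular \<Omega> p (\<lambda>x. f x / s)"
    by (intro mult_left_mono) auto
  then have "ennreal (s powr a) \<le> ennreal (s powr a) * modular \<Omega> p (\<lambda>x. f x / s)"
    by simp
  also have "\<dots> = (\<integral>\<^sup>+x. ennreal (s powr a * \<bar>f x / s\<bar> powr p x) \<partial>lebesgue_on \<Omega>)"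
    unfolding modular_def using assms(1,2)
    by (subst nn_integral_cmult [symmetric]) (auto simp: ennreal_mult)
  also have "\<dots> \<le> modular \<Omega> p f"
    unfolding modular_def using assms(3)
    by (intro nn_integral_mono_AE, eventually_elim) (rule ennreal_leI, rule powr_mult_abs_div_le[OF s])
  finally show ?thesis unfolding s_def .
qed

lemma var_Lp_integrable_powr:
  fixes \<Omega> :: "(real^'n::finite) set"
  assumes f: "var_Lp \<Omega> p f" and p: "p \<in> borel_measurable (lebesgue_on \<Omega>)"
    and bound: "AE x in lebesgue_on \<Omega>. 0 \<le> p x \<and> p x \<le> P"
  shows "integrable (lebesgue_on \<Omega>) (\<lambda>x. \<bar>f x\<bar> powr p x)"
proof -
  obtain s where s: "0 < s" "modular \<Omega> p (\<lambda>x. f x / s) < \<infinity>"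
    and fm: "f \<in> borel_measurable (lebesgue_on \<Omega>)" using f unfolding var_Lp_def by auto
  have "(\<integral>\<^sup>+x. ennreal (\<bar>f x\<bar> powr p x) \<partial>lebesgue_on \<Omega>)
      \<le> (\<integral>\<^sup>+x. ennreal (max 1 s powr P) * ennreal (\<bar>f x / s\<bar> powr p x) \<partial>lebesgue_on \<Omega>)"
  proof (intro nn_integral_mono_AE, use bound in eventually_elim)
    case (elim x)
    then have "ennreal (\<bar>f x\<bar> powr p x) \<le> ennreal (max 1 s powr P * \<bar>f x / s\<bar> powr p x)"
      using s(1) by (intro ennreal_leI abs_powr_le_scaled) auto
    also have "\<dots> = ennreal (max 1 s powr P) * ennreal (\<bar>f x / s\<bar> powr p x)"
      by (intro ennreal_mult) auto
    finally show ?case .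
  qed
  also have "\<dots> = ennreal (max 1 s powr P) * modular \<Omega> p (\<lambda>x. f x / s)"
    unfolding modular_def using p fm by (subst nn_integral_cmult) auto
  also have "\<dots> < \<infinity>" using s by (simp add: ennreal_mult_less_top)
  finally show ?thesis
    by (intro integrableI_nonneg) (use p fm in auto)
qed

lemma modular_le_integral:
  assumes "AE x in lebesgue_on \<Omega>. \<bar>f x\<bar> powr p x \<le> g x"
    and "integrable (lebesgue_on \<Omega>) g"
  shows "modular \<Omega> p f \<le> ennreal (LINT x|lebesgue_on \<Omega>. g x)"
proof -
  have "modular \<Omega> p f \<le> (\<integral>\<^sup>+x. ennreal (g x) \<partial>lebesgue_on \<Omega>)"
    unfolding modular_def using assms(1) by (intro nn_integral_mono_AE) (auto elim!: eventually_mono intro: ennreal_leI)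
  also have "\<dots> = ennreal (LINT x|lebesgue_on \<Omega>. g x)"
    using assms by (intro nn_integral_eq_integral) (auto elim!: eventually_mono intro: order_trans[OF powr_ge_zero])
  finally show ?thesis .
qed

lemma modular_eq_integral:
  assumes "integrable (lebesgue_on \<Omega>) (\<lambda>x. \<bar>f x\<bar> powr p x)"
  shows "modular \<Omega> p f = ennreal (LINT x|lebesgue_on \<Omega>. \<bar>f x\<bar> powr p x)"
  unfolding modular_def using assms by (intro nn_integral_eq_integral) auto

lemma ex_argmax_finite_UNIV:
  fixes g :: "'a::finite \<Rightarrow> 'b::linorder"
  shows "\<exists>k. \<forall>j. g j \<le> g k"
proof -
  have "Max (range g) \<in> range g" by (intro Max_in) auto
  then obtain k where k: "Max (range g) = g k" by blast
  have "g j \<le> g k" for j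
    using Max_ge[of "range g" "g j"] k by simp
  then show ?thesis by blast
qed

lemma norm_vec_powr_le_sum:
  fixes f :: "'n::finite \<Rightarrow> real"
  assumes "0 \<le> p" "p \<le> P"
  shows "norm (\<chi> i. f i) powr p \<le> real CARD('n) powr P * (\<Sum>j\<in>UNIV. \<bar>f j\<bar> powr p)"
proof -
  obtain k where k: "\<And>j. \<bar>f j\<bar> \<le> \<bar>f k\<bar>"
    using ex_argmax_finite_UNIV[of "\<lambda>j. \<bar>f j\<bar>"] by blast
  have "norm (\<chi> i. f i) \<le> (\<Sum>j\<in>UNIV. \<bar>f j\<bar>)"
    using norm_le_l1_cart[of "\<chi> i. f i"] by simp
  also have "\<dots> \<le> real CARD('n) * \<bar>f k\<bar>"
    using sum_bounded_above[of UNIV "\<lambda>j. \<bar>f j\<bar>" "\<bar>f k\<bar>"] k by simp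
  finally have "norm (\<chi> i. f i) powr p \<le> (real CARD('n) * \<bar>f k\<bar>) powr p"
    using assms by (intro powr_mono2) auto
  also have "\<dots> = real CARD('n) powr p * \<bar>f k\<bar> powr p" by (simp add: powr_mult)
  also have "\<dots> \<le> real CARD('n) powr P * (\<Sum>j\<in>UNIV. \<bar>f j\<bar> powr p)"
    using assms by (intro mult_mono powr_mono member_le_sum) (auto simp: Suc_le_eq)
  finally show ?thesis .
qed

lemma integrable_norm_vec_powr:
  fixes \<Omega> :: "(real^'n::finite) set" and Du :: "'i::finite \<Rightarrow> real^'n \<Rightarrow> real"
  assumes Du: "\<And>i. var_Lp \<Omega> p (Du i)" and p: "p \<in> borel_measurable (lebesgue_on \<Omega>)"
    and bound: "AE x in lebesgue_on \<Omega>. 0 \<le> p x \<and> p x \<le> P"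
  shows "integrable (lebesgue_on \<Omega>) (\<lambda>x. norm (\<chi> i. Du i x) powr p x)"
proof (rule Bochner_Integration.integrable_bound)
  show "integrable (lebesgue_on \<Omega>) (\<lambda>x. real CARD('i) powr P * (\<Sum>j\<in>UNIV. \<bar>Du j x\<bar> powr p x))"
    using var_Lp_integrable_powr[OF Du p bound] by auto
  have [measurable]: "Du i \<in> borel_measurable (lebesgue_on \<Omega>)" for i
    using Du by (simp add: var_Lp_def)
  note [measurable] = p
  show "(\<lambda>x. norm (\<chi> i. Du i x) powr p x) \<in> borel_measurable (lebesgue_on \<Omega>)"
    unfolding norm_vec_def L2_set_def vec_lambda_beta by measurable
  show "AE x in lebesgue_on \<Omega>. norm (norm (\<chi> i. Du i x) powr p x)
      \<le> norm (real CARD('i) powr P * (\<Sum>j\<in>UNIV. \<bar>Du j x\<bar> powr p x))"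
    using bound
  proof eventually_elim
    case (elim x)
    then show ?case
      using norm_vec_powr_le_sum[of "p x" P "\<lambda>j. Du j x"] by (simp add: sum_nonneg)
  qed
qed

lemma W0norm_powr_le_gradient_integral:
  fixes \<Omega> :: "(real^'n::finite) set" and Du :: "'n \<Rightarrow> real^'n \<Rightarrow> real"
  assumes p: "p \<in> borel_measurable (lebesgue_on \<Omega>)"
    and bound: "AE x in lebesgue_on \<Omega>. a \<le> p x \<and> p x \<le> P" and a: "0 \<le> a"
    and Du: "\<And>i. var_Lp \<Omega> p (Du i)"
    and large: "2 * real CARD('n) \<le> W0norm \<Omega> p Du"
  shows "(W0norm \<Omega> p Du / (2 * real CARD('n))) powr a
    \<le> (LINT x|lebesgue_on \<Omega>. norm (\<chi> i. Du i x) powr p x)"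
proof -
  let ?L = "lebesgue_on \<Omega>" and ?N = "real CARD('n)"
  obtain k where k: "\<And>j. lux \<Omega> p (Du j) \<le> lux \<Omega> p (Du k)"
    using ex_argmax_finite_UNIV[of "\<lambda>j. lux \<Omega> p (Du j)"] by blast
  have "W0norm \<Omega> p Du \<le> ?N * lux \<Omega> p (Du k)"
    unfolding W0norm_def using sum_bounded_above[of UNIV "\<lambda>i. lux \<Omega> p (Du i)"] k by simp
  then have le_k: "W0norm \<Omega> p Du / (2 * ?N) \<le> lux \<Omega> p (Du k) / 2"
    by (simp add: field_simps)
  moreover have "1 \<le> W0norm \<Omega> p Du / (2 * ?N)"
    using large by (simp add: field_simps)
  ultimately have lux_k: "2 \<le> lux \<Omega> p (Du k)"
    by linarith
  have bound': "AE x in ?L. 0 \<le> p x \<and> p x \<le> P"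
    using bound by eventually_elim (use a in auto)
  have "(W0norm \<Omega> p Du / (2 * ?N)) powr a \<le> (lux \<Omega> p (Du k) / 2) powr a"
    using le_k large a by (intro powr_mono2) auto
  also have "\<dots> \<le> (LINT x|?L. \<bar>Du k x\<bar> powr p x)"
  proof -
    have "ennreal ((lux \<Omega> p (Du k) / 2) powr a) \<le> modular \<Omega> p (Du k)"
      using Du[of k] bound lux_k
      by (intro modular_ge_half_lux_powr p) (auto simp: var_Lp_def elim: eventually_mono)
    also have "\<dots> = ennreal (LINT x|?L. \<bar>Du k x\<bar> powr p x)"
      by (intro modular_eq_integral var_Lp_integrable_powr[OF Du p bound'])
    finally show ?thesis by (simp add: integral_nonneg_AE)
  qed
  also have "\<dots> \<le> (LINT x|?L. norm (\<chi> i. Du i x) powr p x)"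
  proof (intro integral_mono_AE var_Lp_integrable_powr[OF Du p bound']
      integrable_norm_vec_powr[OF Du p bound'])
    show "AE x in ?L. \<bar>Du k x\<bar> powr p x \<le> norm (\<chi> i. Du i x) powr p x"
      using bound' by eventually_elim
        (use component_le_norm_cart[of "\<chi> i. Du i _" k] in \<open>auto intro: powr_mono2\<close>)
  qed
  finally show ?thesis by (simp add: mult.commute)
qed

lemma integrable_npow_mult_square:
  fixes \<Omega> :: "(real^'n::finite) set"
  assumes p: "p \<in> borel_measurable (lebesgue_on \<Omega>)"
    and bound: "AE x in lebesgue_on \<Omega>. 2 \<le> p x \<and> p x \<le> P"
    and u: "var_Lp \<Omega> p u" and v: "var_Lp \<Omega> p v"
  shows "integrable (lebesgue_on \<Omega>) (\<lambda>x. npow \<bar>u x\<bar> (p x - 2) * (v x)\<^sup>2)"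
proof (rule Bochner_Integration.integrable_bound)
  have bound': "AE x in lebesgue_on \<Omega>. 0 \<le> p x \<and> p x \<le> P"
    using bound by eventually_elim auto
  show "integrable (lebesgue_on \<Omega>) (\<lambda>x. \<bar>u x\<bar> powr p x + \<bar>v x\<bar> powr p x)"
    using var_Lp_integrable_powr[OF u p bound'] var_Lp_integrable_powr[OF v p bound'] by simp
  have [measurable]: "u \<in> borel_measurable (lebesgue_on \<Omega>)" "v \<in> borel_measurable (lebesgue_on \<Omega>)"
    using u v by (simp_all add: var_Lp_def)
  note [measurable] = p
  show "(\<lambda>x. npow \<bar>u x\<bar> (p x - 2) * (v x)\<^sup>2) \<in> borel_measurable (lebesgue_on \<Omega>)"
    unfolding npow_def by measurable
  show "AE x in lebesgue_on \<Omega>. norm (npow \<bar>u x\<bar> (p x - 2) * (v x)\<^sup>2)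
      \<le> norm (\<bar>u x\<bar> powr p x + \<bar>v x\<bar> powr p x)"
    using bound by eventually_elim (simp add: npow_mult_square_le abs_mult)
qed

lemma Snorm_square_bound:
  fixes \<Omega> :: "(real^'n::finite) set" and Du :: "'n \<Rightarrow> real^'n \<Rightarrow> real"
  assumes \<Omega>: "\<Omega> \<in> lmeasurable"
    and p: "p \<in> borel_measurable (lebesgue_on \<Omega>)" and \<alpha>: "\<alpha> \<in> borel_measurable (lebesgue_on \<Omega>)"
    and bound: "AE x in lebesgue_on \<Omega>. 2 \<le> p x \<and> p x \<le> \<alpha> x \<and> \<alpha> x \<le> Q"
    and u: "var_Lp \<Omega> \<alpha> u" "var_Lp \<Omega> p u" and Du: "\<And>i. var_Lp \<Omega> p (Du i)"
    and large: "2 \<le> Snorm \<Omega> p \<alpha> u Du"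
  shows "(Snorm \<Omega> p \<alpha> u Du / 2)\<^sup>2 < (LINT x|lebesgue_on \<Omega>. \<bar>u x\<bar> powr \<alpha> x)
    + (\<Sum>i\<in>UNIV. LINT x|lebesgue_on \<Omega>. npow \<bar>u x\<bar> (p x - 2) * (Du i x)\<^sup>2)
    + CARD('n) * ((LINT x|lebesgue_on \<Omega>. \<bar>u x\<bar> powr \<alpha> x) + measure lebesgue \<Omega>)"
proof -
  let ?L = "lebesgue_on \<Omega>" and ?N = "real CARD('n)"
  define s where "s = Snorm \<Omega> p \<alpha> u Du / 2"
  define a where "a = (LINT x|?L. \<bar>u x\<bar> powr \<alpha> x)"
  define b where "b i = (LINT x|?L. npow \<bar>u x\<bar> (p x - 2) * (Du i x)\<^sup>2)" for i
  define \<mu> where "\<mu> = measure lebesgue \<Omega>"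
  have s: "1 \<le> s" using large by (simp add: s_def)
  interpret finite_measure ?L using finite_measure_lebesgue_on[OF \<Omega>] .
  have int_u: "integrable ?L (\<lambda>x. \<bar>u x\<bar> powr \<alpha> x)"
    using bound by (intro var_Lp_integrable_powr[OF u(1) \<alpha>]) (auto elim: eventually_mono)
  have int_B: "integrable ?L (\<lambda>x. npow \<bar>u x\<bar> (p x - 2) * (Du i x)\<^sup>2)" for i
    using bound by (intro integrable_npow_mult_square[OF p _ u(2) Du, where P = Q]) (auto elim: eventually_mono)
  have \<mu>: "measure ?L \<Omega> = \<mu>"
    using \<Omega> by (simp add: \<mu>_def measure_restrict_space fmeasurableD)
  have "\<not> modular \<Omega> \<alpha> (\<lambda>x. u x / s) + (\<Sum>i\<in>UNIV. modular \<Omega> (\<lambda>x. p x / (p x - 1))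
      (\<lambda>x. npow \<bar>u x\<bar> (p x / (p x - 1) * (p x - 2) / (p x / (p x - 1))) * Du i x /
        s powr (p x / (p x - 1) * (p x - 2) / (p x / (p x - 1)) + 1))) \<le> 1"
    using Inf_half_not_mem[OF large[unfolded Snorm_def Let_def]]
    unfolding s_def Snorm_def Let_def .
  then have "1 < modular \<Omega> \<alpha> (\<lambda>x. u x / s) + (\<Sum>i\<in>UNIV. modular \<Omega> (\<lambda>x. p x / (p x - 1))
      (\<lambda>x. npow \<bar>u x\<bar> (p x / (p x - 1) * (p x - 2) / (p x / (p x - 1))) * Du i x /
        s powr (p x / (p x - 1) * (p x - 2) / (p x / (p x - 1)) + 1)))"
    by (simp only: not_le)
  also have "\<dots> \<le> ennreal (s powr (-2) * a) + (\<Sum>i\<in>UNIV. ennreal (s powr (-2) * (b i + a + \<mu>)))"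
  proof (intro add_mono sum_mono)
    have "AE x in ?L. \<bar>u x / s\<bar> powr \<alpha> x \<le> s powr (-2) * \<bar>u x\<bar> powr \<alpha> x"
      using bound by eventually_elim (rule abs_divide_powr_le[OF s], linarith)
    then have "modular \<Omega> \<alpha> (\<lambda>x. u x / s) \<le> ennreal (LINT x|?L. s powr (-2) * \<bar>u x\<bar> powr \<alpha> x)"
      using int_u by (intro modular_le_integral) auto
    then show "modular \<Omega> \<alpha> (\<lambda>x. u x / s) \<le> ennreal (s powr (-2) * a)"
      by (simp add: a_def)
    fix i
    have "AE x in ?L. abs (npow \<bar>u x\<bar> (p x / (p x - 1) * (p x - 2) / (p x / (p x - 1))) * Du i x /
        s powr (p x / (p x - 1) * (p x - 2) / (p x / (p x - 1)) + 1)) powr (p x / (p x - 1))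
      \<le> s powr (-2) * (npow \<bar>u x\<bar> (p x - 2) * (Du i x)\<^sup>2 + \<bar>u x\<bar> powr \<alpha> x + 1)"
      using bound
    proof eventually_elim
      case (elim x)
      have "\<bar>u x\<bar> powr p x \<le> \<bar>u x\<bar> powr \<alpha> x + 1"
        using elim by (intro abs_powr_le_powr_plus_one) auto
      then show ?case
        using elim s by (intro order_trans[OF Snorm_integrand_le] mult_left_mono) auto
    qed
    then show "modular \<Omega> (\<lambda>x. p x / (p x - 1))
        (\<lambda>x. npow \<bar>u x\<bar> (p x / (p x - 1) * (p x - 2) / (p x / (p x - 1))) * Du i x /
          s powr (p x / (p x - 1) * (p x - 2) / (p x / (p x - 1)) + 1))
      \<le> ennreal (s powr (-2) * (b i + a + \<mu>))"
    proof (rule order_trans[OF modular_le_integral])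
      show "integrable ?L (\<lambda>x. s powr (-2) * (npow \<bar>u x\<bar> (p x - 2) * (Du i x)\<^sup>2 + \<bar>u x\<bar> powr \<alpha> x + 1))"
        using int_B int_u by auto
    qed (simp_all add: a_def b_def \<mu> int_B int_u)
  qed
  also have "\<dots> = ennreal (s powr (-2) * a + (\<Sum>i\<in>UNIV. s powr (-2) * (b i + a + \<mu>)))"
    by (simp add: a_def b_def \<mu>_def integral_nonneg_AE sum_nonneg)
  also have "\<dots> = ennreal (s powr (-2) * (a + (\<Sum>i\<in>UNIV. b i) + ?N * (a + \<mu>)))"
    by (simp add: sum_distrib_left sum_distrib_right sum.distrib algebra_simps)
  finally have "1 < s powr (-2) * (a + (\<Sum>i\<in>UNIV. b i) + ?N * (a + \<mu>))"
    by (simp add: ennreal_less_iff)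
  then show ?thesis
    using s by (simp add: s_def a_def b_def \<mu>_def powr_minus powr_numeral field_simps)
qed

lemma integrable_caratheodory_mult:
  fixes \<Omega> :: "(real^'n::finite) set" and c :: "real^'n \<Rightarrow> real \<Rightarrow> real"
  assumes \<Omega>: "\<Omega> \<in> sets lebesgue"
    and c_meas: "\<And>\<tau>. (\<lambda>x. c x \<tau>) \<in> borel_measurable (lebesgue_on \<Omega>)"
    and c_cont: "AE x in lebesgue_on \<Omega>. continuous_on UNIV (c x)"
    and growth: "AE x in lebesgue_on \<Omega>. \<forall>\<tau>. \<bar>c x \<tau>\<bar> \<le> c0 x * npow \<bar>\<tau>\<bar> (\<alpha> x - 1) + c1 x"
    and coeffs: "AE x in lebesgue_on \<Omega>. 0 \<le> c0 x \<and> c0 x \<le> B \<and> 0 \<le> c1 x"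
    and \<alpha>: "\<alpha> \<in> borel_measurable (lebesgue_on \<Omega>)"
    and \<alpha>_bound: "AE x in lebesgue_on \<Omega>. 2 \<le> \<alpha> x \<and> \<alpha> x \<le> Q"
    and c1: "var_Lp \<Omega> (\<lambda>x. \<alpha> x / (\<alpha> x - 1)) c1" and u: "var_Lp \<Omega> \<alpha> u"
  shows "integrable (lebesgue_on \<Omega>) (\<lambda>x. c x (u x) * u x)"
proof (rule Bochner_Integration.integrable_bound)
  let ?L = "lebesgue_on \<Omega>"
  have [measurable]: "u \<in> borel_measurable ?L" "c1 \<in> borel_measurable ?L"
    using u c1 by (simp_all add: var_Lp_def)
  note [measurable] = \<alpha> caratheodory_measurable[OF \<Omega> c_meas c_cont]
  have int_u: "integrable ?L (\<lambda>x. \<bar>u x\<bar> powr \<alpha> x)"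
    using \<alpha>_bound by (intro var_Lp_integrable_powr[OF u \<alpha>]) (auto elim: eventually_mono)
  have "integrable ?L (\<lambda>x. \<bar>c1 x\<bar> powr (\<alpha> x / (\<alpha> x - 1)))"
    using \<alpha>_bound by (intro var_Lp_integrable_powr[OF c1, where P = 2]) (auto elim!: eventually_mono simp: field_simps)
  with int_u show "integrable ?L (\<lambda>x. (B + 1) * \<bar>u x\<bar> powr \<alpha> x + \<bar>c1 x\<bar> powr (\<alpha> x / (\<alpha> x - 1)))"
    by auto
  show "(\<lambda>x. c x (u x) * u x) \<in> borel_measurable ?L"
    by measurable
  show "AE x in ?L. norm (c x (u x) * u x)
      \<le> norm ((B + 1) * \<bar>u x\<bar> powr \<alpha> x + \<bar>c1 x\<bar> powr (\<alpha> x / (\<alpha> x - 1)))"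
    using growth coeffs \<alpha>_bound
  proof eventually_elim
    case (elim x)
    then have "\<bar>c x (u x) * u x\<bar> \<le> (c0 x + 1) * \<bar>u x\<bar> powr \<alpha> x + c1 x powr (\<alpha> x / (\<alpha> x - 1))"
      by (intro growth_bound_mult) auto
    also have "\<dots> \<le> (B + 1) * \<bar>u x\<bar> powr \<alpha> x + c1 x powr (\<alpha> x / (\<alpha> x - 1))"
      using elim by (simp add: mult_right_mono)
    finally show ?case using elim by simp
  qed
qed

lemma integral_caratheodory_mult_ge:
  fixes c :: "'a::euclidean_space \<Rightarrow> real \<Rightarrow> real" and u \<alpha> c2 :: "'a \<Rightarrow> real"
  assumes "integrable (lebesgue_on \<Omega>) (\<lambda>x. c x (u x) * u x)"
    and "integrable (lebesgue_on \<Omega>) (\<lambda>x. \<bar>u x\<bar> powr \<alpha> x)"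
    and "AE x in lebesgue_on \<Omega>. \<forall>\<tau>. c2 x * \<bar>\<tau>\<bar> powr \<alpha> x \<le> c x \<tau> * \<tau>"
    and "AE x in lebesgue_on \<Omega>. C \<le> c2 x"
  shows "C * (LINT x|lebesgue_on \<Omega>. \<bar>u x\<bar> powr \<alpha> x) \<le> (LINT x|lebesgue_on \<Omega>. c x (u x) * u x)"
proof -
  have "AE x in lebesgue_on \<Omega>. C * \<bar>u x\<bar> powr \<alpha> x \<le> c x (u x) * u x"
    using assms(3,4)
  proof eventually_elim
    case (elim x)
    then have "C * \<bar>u x\<bar> powr \<alpha> x \<le> c2 x * \<bar>u x\<bar> powr \<alpha> x"
      by (simp add: mult_right_mono)
    then show ?case using elim(1) by (meson order_trans)
  qed
  then show ?thesis
    using assms(1,2) by (subst integral_mult_right_zero [symmetric]) (intro integral_mono_AE, auto)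
qed

lemma quadratic_absorption:
  fixes S a B V N C \<mu> :: real
  assumes S: "(S / 2)\<^sup>2 < a + B + N * (a + \<mu>)" and V: "C * a \<le> V"
    and "0 < C" "0 \<le> a" "0 \<le> B" "0 \<le> N" and \<mu>: "8 * N * \<mu> \<le> S\<^sup>2"
  shows "S / (8 * max 1 ((N + 1) / C)) * S \<le> B + V"
proof -
  define K where "K = max 1 ((N + 1) / C)"
  have K: "1 \<le> K" "(N + 1) / C \<le> K" by (simp_all add: K_def)
  have "0 \<le> V" using V assms by (meson mult_nonneg_nonneg less_imp_le order_trans)
  have "a \<le> V / C"
    using V assms by (simp add: field_simps mult.commute)
  then have "(N + 1) * a \<le> (N + 1) / C * V"
    using mult_left_mono[of a "V / C" "N + 1"] assms by simp
  also have "\<dots> \<le> K * V"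
    using K \<open>0 \<le> V\<close> by (intro mult_right_mono) auto
  finally have "S\<^sup>2 / 4 < K * (B + V) + N * \<mu>"
    using S K assms mult_right_mono[OF K(1), of B] by (simp add: power_divide algebra_simps)
  then have "S\<^sup>2 < 8 * K * (B + V)"
    using \<mu> by simp
  then have "S\<^sup>2 / (8 * K) \<le> B + V"
    using K by (simp add: pos_divide_le_eq mult.commute)
  then show ?thesis
    by (simp add: K_def power2_eq_square)
qed

definition growth_function :: "(real \<Rightarrow> real) \<Rightarrow> bool" where
  "growth_function f \<longleftrightarrow>
    continuous_on {0..} f \<and> mono_on {0..} f \<and> filterlim f at_top at_top"

lemma growth_function_powr:
  fixes k e :: real
  assumes k: "0 < k" and e: "0 < e"
  shows "growth_function (\<lambda>t. (k * t) powr e * k)"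
  unfolding growth_function_def
proof (intro conjI mono_onI)
  show "continuous_on {0..} (\<lambda>t. (k * t) powr e * k)"
    using k e by (intro continuous_intros continuous_on_powr') auto
  show "(k * r) powr e * k \<le> (k * t) powr e * k" if "r \<in> {0..}" "t \<in> {0..}" "r \<le> t" for r t
    using that k e by (intro mult_right_mono powr_mono2) auto
  have lim: "filterlim (\<lambda>t. exp (e * ln (k * t)) * k) at_top at_top"
  proof (intro filterlim_at_top_mult_tendsto_pos[OF tendsto_const k] filterlim_compose[OF exp_at_top])
    have "filterlim (\<lambda>t. ln (k * t)) at_top at_top"
      by (rule filterlim_compose[OF ln_at_top filterlim_tendsto_pos_mult_at_top[OF tendsto_const k filterlim_ident]])
    then show "filterlim (\<lambda>t. e * ln (k * t)) at_top at_top"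
      by (rule filterlim_tendsto_pos_mult_at_top[OF tendsto_const e])
  qed
  have "\<forall>\<^sub>F t in at_top. exp (e * ln (k * t)) * k = (k * t) powr e * k"
    using eventually_gt_at_top[of 0] by eventually_elim (use k in \<open>simp add: powr_def\<close>)
  from filterlim_cong[OF refl refl this] lim
  show "filterlim (\<lambda>t. (k * t) powr e * k) at_top at_top"
    by (rule iffD1)
qed

lemma growth_function_linear:
  fixes k :: real
  assumes "0 < k"
  shows "growth_function (\<lambda>t. t / k)"
  unfolding growth_function_def
proof (intro conjI mono_onI)
  show "continuous_on {0..} (\<lambda>t. t / k)"
    using assms by (intro continuous_intros) auto
  show "r / k \<le> t / k" if "r \<le> t" for r t
    using that assms by (simp add: divide_right_mono)
  show "filterlim (\<lambda>t. t / k) at_top at_top"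
    using filterlim_at_top_mult_tendsto_pos[OF tendsto_const[of "1 / k"] _ filterlim_ident] assms
    by simp
qed

lemma Tpair_lower_bound:
  fixes \<Omega> :: "(real^'n::finite) set" and Du :: "'n \<Rightarrow> real^'n \<Rightarrow> real"
    and c :: "real^'n \<Rightarrow> real \<Rightarrow> real"
  assumes \<Omega>: "\<Omega> \<in> lmeasurable"
    and p0: "p0 \<in> borel_measurable (lebesgue_on \<Omega>)" and p1: "p1 \<in> borel_measurable (lebesgue_on \<Omega>)"
    and \<alpha>: "\<alpha> \<in> borel_measurable (lebesgue_on \<Omega>)"
    and p1_bound: "AE x in lebesgue_on \<Omega>. a \<le> p1 x \<and> p1 x \<le> P" "0 \<le> a"
    and p0_\<alpha>: "AE x in lebesgue_on \<Omega>. 2 \<le> p0 x \<and> p0 x \<le> \<alpha> x \<and> \<alpha> x \<le> Q"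
    and c_meas: "\<And>\<tau>. (\<lambda>x. c x \<tau>) \<in> borel_measurable (lebesgue_on \<Omega>)"
    and c_cont: "AE x in lebesgue_on \<Omega>. continuous_on UNIV (c x)"
    and c_growth: "AE x in lebesgue_on \<Omega>. \<forall>\<tau>. \<bar>c x \<tau>\<bar> \<le> c0 x * npow \<bar>\<tau>\<bar> (\<alpha> x - 1) + c1 x"
    and coeffs: "AE x in lebesgue_on \<Omega>. 0 \<le> c0 x \<and> c0 x \<le> B \<and> 0 \<le> c1 x"
    and c1: "var_Lp \<Omega> (\<lambda>x. \<alpha> x / (\<alpha> x - 1)) c1"
    and c_coerc: "AE x in lebesgue_on \<Omega>. \<forall>\<tau>. c2 x * \<bar>\<tau>\<bar> powr \<alpha> x \<le> c x \<tau> * \<tau>"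
    and c2: "AE x in lebesgue_on \<Omega>. C \<le> c2 x" "0 < C"
    and u: "W0 \<Omega> p0 u Du" "W0 \<Omega> p1 u Du" "var_Lp \<Omega> \<alpha> u"
    and large: "2 * real CARD('n) \<le> W0norm \<Omega> p1 Du" "2 \<le> Snorm \<Omega> p0 \<alpha> u Du"
      "8 * real CARD('n) * measure lebesgue \<Omega> \<le> (Snorm \<Omega> p0 \<alpha> u Du)\<^sup>2"
  shows "(W0norm \<Omega> p1 Du / (2 * real CARD('n))) powr a
      + Snorm \<Omega> p0 \<alpha> u Du / (8 * max 1 ((real CARD('n) + 1) / C)) * Snorm \<Omega> p0 \<alpha> u Du
    \<le> Tpair \<Omega> p0 p1 c u Du"
proof -
  let ?L = "lebesgue_on \<Omega>" and ?S = "Snorm \<Omega> p0 \<alpha> u Du"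
  let ?a = "LINT x|?L. \<bar>u x\<bar> powr \<alpha> x"
    and ?b = "\<Sum>i\<in>UNIV. LINT x|?L. npow \<bar>u x\<bar> (p0 x - 2) * (Du i x)\<^sup>2"
    and ?V = "LINT x|?L. c x (u x) * u x"
  have Du: "var_Lp \<Omega> p0 u" "\<And>i. var_Lp \<Omega> p0 (Du i)" "\<And>i. var_Lp \<Omega> p1 (Du i)"
    using u(1,2) by (auto simp: W0_def)
  have \<alpha>_bound: "AE x in ?L. 2 \<le> \<alpha> x \<and> \<alpha> x \<le> Q"
    using p0_\<alpha> by eventually_elim auto
  have int_u: "integrable ?L (\<lambda>x. \<bar>u x\<bar> powr \<alpha> x)"
    using \<alpha>_bound by (intro var_Lp_integrable_powr[OF u(3) \<alpha>]) (auto elim: eventually_mono)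
  have "integrable ?L (\<lambda>x. c x (u x) * u x)"
    using \<Omega> by (intro integrable_caratheodory_mult[OF _ c_meas c_cont c_growth coeffs \<alpha> \<alpha>_bound c1 u(3)])
      (simp add: fmeasurableD)
  then have "C * ?a \<le> ?V"
    using int_u c_coerc c2(1) by (rule integral_caratheodory_mult_ge)
  moreover have "(?S / 2)\<^sup>2 < ?a + ?b + real CARD('n) * (?a + measure lebesgue \<Omega>)"
    by (rule Snorm_square_bound[OF \<Omega> p0 \<alpha> p0_\<alpha> u(3) Du(1,2) large(2)])
  ultimately have "?S / (8 * max 1 ((real CARD('n) + 1) / C)) * ?S \<le> ?b + ?V"
    using c2(2) large(3) by (intro quadratic_absorption) (auto simp: integral_nonneg_AE sum_nonneg)
  moreover have "(W0norm \<Omega> p1 Du / (2 * real CARD('n))) powr a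
      \<le> (LINT x|?L. norm (\<chi> i. Du i x) powr p1 x)"
    by (rule W0norm_powr_le_gradient_integral[OF p1 p1_bound Du(3) large(1)])
  ultimately show ?thesis
    by (simp add: Tpair_def)
qed

theorem lemma4p1:
  fixes \<Omega> :: "(real^'n) set"
    and p0 p1 \<alpha> c0 c1 c2 :: "real^'n \<Rightarrow> real"
    and c :: "real^'n \<Rightarrow> real \<Rightarrow> real"
  assumes n3: "CARD('n) \<ge> 3"
    and dom: "lipschitz_domain \<Omega>"
    and p0_meas: "p0 \<in> borel_measurable (lebesgue_on \<Omega>)"
    and p1_meas: "p1 \<in> borel_measurable (lebesgue_on \<Omega>)"
    and p0_bd: "\<exists>P. (AE x in lebesgue_on \<Omega>. 2 \<le> p0 x \<and> p0 x \<le> P)"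
    and p1_bd: "\<exists>a P. 1 < a \<and> (AE x in lebesgue_on \<Omega>. a \<le> p1 x \<and> p1 x \<le> P)"
    and p0_C1: "C1_closure \<Omega> p0"
    and p1_C0: "continuous_on (closure \<Omega>) p1"
    and \<alpha>_meas: "\<alpha> \<in> borel_measurable (lebesgue_on \<Omega>)"
    and \<alpha>_bd: "\<exists>P. (AE x in lebesgue_on \<Omega>. 1 \<le> \<alpha> x \<and> \<alpha> x \<le> P)"
    and \<alpha>_p0: "\<exists>\<epsilon>>0. (AE x in lebesgue_on \<Omega>. \<alpha> x \<ge> p0 x + \<epsilon>)"
    and c_meas: "\<forall>\<tau>. (\<lambda>x. c x \<tau>) \<in> borel_measurable (lebesgue_on \<Omega>)"
    and c_cont: "AE x in lebesgue_on \<Omega>. continuous_on UNIV (c x)"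
    and c_growth: "AE x in lebesgue_on \<Omega>. \<forall>\<tau>. \<bar>c x \<tau>\<bar> \<le> c0 x * npow \<bar>\<tau>\<bar> (\<alpha> x - 1) + c1 x"
    and c_coerc: "AE x in lebesgue_on \<Omega>. \<forall>\<tau>. c x \<tau> * \<tau> \<ge> c2 x * \<bar>\<tau>\<bar> powr \<alpha> x"
    and c0_Linf: "c0 \<in> borel_measurable (lebesgue_on \<Omega>) \<and> (\<exists>B. AE x in lebesgue_on \<Omega>. \<bar>c0 x\<bar> \<le> B)"
    and c2_Linf: "c2 \<in> borel_measurable (lebesgue_on \<Omega>) \<and> (\<exists>B. AE x in lebesgue_on \<Omega>. \<bar>c2 x\<bar> \<le> B)"
    and c1_L: "var_Lp \<Omega> (\<lambda>x. \<alpha> x / (\<alpha> x - 1)) c1"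
    and c_nonneg: "AE x in lebesgue_on \<Omega>. c0 x \<ge> 0 \<and> c1 x \<ge> 0 \<and> c2 x \<ge> 0"
    and c2_pos: "\<exists>C>0. AE x in lebesgue_on \<Omega>. c2 x \<ge> C"
  shows "\<exists>M>0. \<exists>lam0 lam1 :: real \<Rightarrow> real.
           continuous_on {0..} lam0 \<and> mono_on {0..} lam0 \<and> filterlim lam0 at_top at_top \<and>
           continuous_on {0..} lam1 \<and> mono_on {0..} lam1 \<and> filterlim lam1 at_top at_top \<and>
           (\<forall>u Du. (\<forall>i. weak_pderiv \<Omega> u i (Du i)) \<and>
                    W0 \<Omega> p0 u Du \<and> W0 \<Omega> p1 u Du \<and> var_Lp \<Omega> \<alpha> u \<and>
                    W0norm \<Omega> p1 Du \<ge> M \<and> Snorm \<Omega> p0 \<alpha> u Du \<ge> M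
              \<longrightarrow> Tpair \<Omega> p0 p1 c u Du \<ge>
                    lam0 (W0norm \<Omega> p1 Du) * W0norm \<Omega> p1 Du
                    + lam1 (Snorm \<Omega> p0 \<alpha> u Du) * Snorm \<Omega> p0 \<alpha> u Du)"
proof -
  let ?L = "lebesgue_on \<Omega>" and ?N = "real CARD('n)"
  have \<Omega>: "\<Omega> \<in> lmeasurable"
    using dom by (auto simp: lipschitz_domain_def intro: lmeasurable_open)
  obtain P0 where P0: "AE x in ?L. 2 \<le> p0 x \<and> p0 x \<le> P0" using p0_bd by blast
  obtain a1 P1 where a1: "1 < a1" and P1: "AE x in ?L. a1 \<le> p1 x \<and> p1 x \<le> P1" using p1_bd by blast
  obtain Q where Q: "AE x in ?L. \<alpha> x \<le> Q" using \<alpha>_bd by (auto elim: eventually_mono)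
  obtain \<epsilon> where \<epsilon>: "0 < \<epsilon>" "AE x in ?L. p0 x + \<epsilon> \<le> \<alpha> x" using \<alpha>_p0 by blast
  obtain B where "AE x in ?L. \<bar>c0 x\<bar> \<le> B" using c0_Linf by blast
  with c_nonneg have coeffs: "AE x in ?L. 0 \<le> c0 x \<and> c0 x \<le> B \<and> 0 \<le> c1 x"
    by eventually_elim auto
  obtain C where C: "0 < C" "AE x in ?L. C \<le> c2 x" using c2_pos by blast
  have p0_\<alpha>: "AE x in ?L. 2 \<le> p0 x \<and> p0 x \<le> \<alpha> x \<and> \<alpha> x \<le> Q"
    using P0 \<epsilon>(2) Q by eventually_elim (use \<epsilon>(1) in auto)
  define lam0 where "lam0 = (\<lambda>t. (t / (2 * ?N)) powr (a1 - 1) / (2 * ?N))"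
  define lam1 where "lam1 = (\<lambda>t. t / (8 * max 1 ((?N + 1) / C)))"
  define M where "M = max (2 * ?N) (max 2 (sqrt (8 * ?N * measure lebesgue \<Omega>)))"
  have "growth_function lam0"
    using growth_function_powr[of "1 / (2 * ?N)" "a1 - 1"] a1 by (simp add: lam0_def)
  moreover have "growth_function lam1"
    unfolding lam1_def by (intro growth_function_linear) auto
  moreover have "lam0 (W0norm \<Omega> p1 Du) * W0norm \<Omega> p1 Du + lam1 (Snorm \<Omega> p0 \<alpha> u Du) * Snorm \<Omega> p0 \<alpha> u Du
      \<le> Tpair \<Omega> p0 p1 c u Du"
    if u: "W0 \<Omega> p0 u Du" "W0 \<Omega> p1 u Du" "var_Lp \<Omega> \<alpha> u"
      and large: "M \<le> W0norm \<Omega> p1 Du" "M \<le> Snorm \<Omega> p0 \<alpha> u Du" for u Du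
  proof -
    have "lam0 (W0norm \<Omega> p1 Du) * W0norm \<Omega> p1 Du = (W0norm \<Omega> p1 Du / (2 * ?N)) powr a1"
      using large(1) powr_diff_one_mult[of "W0norm \<Omega> p1 Du / (2 * ?N)" a1]
      by (auto simp: lam0_def M_def)
    moreover have "8 * ?N * measure lebesgue \<Omega> \<le> (Snorm \<Omega> p0 \<alpha> u Du)\<^sup>2"
      using large(2) real_sqrt_le_iff[of _ "(Snorm \<Omega> p0 \<alpha> u Du)\<^sup>2"] by (auto simp: M_def)
    then have "(W0norm \<Omega> p1 Du / (2 * ?N)) powr a1
        + Snorm \<Omega> p0 \<alpha> u Du / (8 * max 1 ((?N + 1) / C)) * Snorm \<Omega> p0 \<alpha> u Du
      \<le> Tpair \<Omega> p0 p1 c u Du"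
      using large a1 c_meas C
      by (intro Tpair_lower_bound[OF \<Omega> p0_meas p1_meas \<alpha>_meas P1 _ p0_\<alpha> _ c_cont c_growth
          coeffs c1_L c_coerc _ _ u]) (auto simp: M_def)
    ultimately show ?thesis
      by (simp add: lam1_def)
  qed
  moreover have "0 < M"
    by (simp add: M_def less_max_iff_disj)
  ultimately show ?thesis
    unfolding growth_function_def by blast
qed

end
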